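(* Let $T_1=(Q_1,\Sigma,\Delta,R_1,q_1^0)$ and $T_2=(Q_2,\Delta,\Omega,R_2,q_2^0)$ be top-down tree transducers, let $A$ be the domain automaton of $T_2$, and let $\hat{T}_1$ be the product construction of $T_1$ and $A$. Let $s\in T_\Sigma$ and let $t$ be producible by the state $q_1$ of $T_1$ on input $s$. Let $S\subseteq Q_2$ be such that $t\in\bigcap_{q\in S}\text{dom}(q)$. Then $t$ is producible by the state $(q_1,S)$ of $\hat{T}_1$ on input $s$.
   Context: A top-down tree transducer $T=(Q,\Sigma,\Delta,R,q_0)$ has finite state set $Q$, ranked input/output alphabets $\Sigma,\Delta$, initial state $q_0$, and finite rule set $R$ of rules $q(a(x_1,\dots,x_k))\to t$ with $a\in\Sigma_k$ ($\Sigma_k$ = symbols of rank $k$) and $t$ a tree over $\Delta$ whose leaves may additionally be of the form $q'(x_i)$, $q'\in Q$, $i\in[k]$; rules are used as rewrite rules in the usual way. A state $q$ produces $t$ on input $s$ if the tree $t$ over $\Delta$ is derivable from $q(s)$; $\text{dom}(q)$ is the set of inputs on which $q$ produces some tree (an empty intersection of domains is the set of all trees). For $q\in Q$, $a\in\Sigma_k$, $\text{rhs}_T(q,a)$ is the set of right-hand sides of rules with left-hand side $q(a(x_1,\dots,x_k))$; for a set $\Gamma$ of right-hand sides, $\Gamma[x_i]$ is the set of $q'\in Q$ with $q'(x_i)$ occurring in some tree of $\Gamma$. Domain automaton of $T$: the top-down tree automaton (transducer over $\Sigma$ with rules of the form $p(a(x_1,\dots,x_k))\to a(p_1(x_1),\dots,p_k(x_k))$)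 with states all subsets of $Q$, initial state $\{q_0\}$, rules $S(a(x_1,\dots,x_k))\to a(S_1(x_1),\dots,S_k(x_k))$ for every $a\in\Sigma_k$, nonempty $S=\{q_1,\dots,q_n\}\subseteq Q$ and nonempty $\Gamma_j\subseteq\text{rhs}_T(q_j,a)$ ($j\in[n]$), where $S_i=\bigcup_j\Gamma_j[x_i]$, and rules $\emptyset(a(x_1,\dots,x_k))\to a(\emptyset(x_1),\dots,\emptyset(x_k))$ for all $a$. Product construction of transducers $T=(Q,\Sigma,\Delta,R,q_0)$ and $T'=(Q',\Delta,\Omega,R',q'_0)$: the transducer with states $Q\times Q'$, input $\Sigma$, output $\Omega$, initial state $(q_0,q'_0)$, and, for every rule $q(a(x_1,\dots,x_k))\to\xi$ of $T$, every $p\in Q'$ and every tree $\zeta$ derivable from $p(\xi)$ using rules of $T'$ in which the leaves of $\xi$ of the form $q''(x_i)$ are treated as unrewritable symbols and a state $p'$ applied to such a leaf stays as $p'(q''(x_i))$, the rule $(q,p)(a(x_1,\dots,x_k))\to\zeta'$, where $\zeta'$ is obtained from $\zeta$ by replacing each $p'(q''(x_i))$ by $(q'',p')(x_i)$. *)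

theory Defs
  imports Main
begin

(* Trees over a ranked alphabet, possibly with variable leaves.
   A ranked alphabet is a set of pairs (symbol, rank); a node Nd a ts is
   well-ranked iff (a, length ts) is in the alphabet. *)
datatype (syms_tr: 'f, vars_tr: 'v) tr = Var 'v | Nd 'f "('f,'v) tr list"

datatype 'f gtree = GNd 'f "'f gtree list"

fun to_tr :: "'f gtree \<Rightarrow> ('f,'v) tr" where
  "to_tr (GNd a ts) = Nd a (map to_tr ts)"

fun wf_gtree :: "('f \<times> nat) set \<Rightarrow> 'f gtree \<Rightarrow> bool" where
  "wf_gtree \<Sigma> (GNd a ts) \<longleftrightarrow> (a, length ts) \<in> \<Sigma> \<and> (\<forall>t\<in>set ts. wf_gtree \<Sigma> t)"

fun wf_tr :: "('f \<times> nat) set \<Rightarrow> ('f,'v) tr \<Rightarrow> bool" where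
  "wf_tr \<Sigma> (Var v) \<longleftrightarrow> True"
| "wf_tr \<Sigma> (Nd a ts) \<longleftrightarrow> (a, length ts) \<in> \<Sigma> \<and> (\<forall>t\<in>set ts. wf_tr \<Sigma> t)"

(* A rule (q, a, k, r) stands for q(a(x_1,...,x_k)) -> r, where r is a tree
   over Delta whose leaves may be Var (q', i), standing for q'(x_i), 1 <= i <= k. *)
record ('q,'f,'g) tdtt =
  states :: "'q set"
  inp    :: "('f \<times> nat) set"
  outp   :: "('g \<times> nat) set"
  rules  :: "('q \<times> 'f \<times> nat \<times> ('g, 'q \<times> nat) tr) set"
  init   :: 'q

definition wf_tdtt :: "('q,'f,'g) tdtt \<Rightarrow> bool" where
  "wf_tdtt T \<longleftrightarrow> finite (states T) \<and> finite (inp T) \<and> finite (outp T)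
     \<and> finite (rules T) \<and> init T \<in> states T
     \<and> (\<forall>(q,a,k,r)\<in>rules T. q \<in> states T \<and> (a,k) \<in> inp T \<and> wf_tr (outp T) r
          \<and> (\<forall>(q',i)\<in>vars_tr r. q' \<in> states T \<and> 1 \<le> i \<and> i \<le> k))"

(* Variable leaves v of the input are treated as
   unrewritable symbols: a state q applied to such a leaf stays as q(v),
   represented by Var (q, v) in the output. Each occurrence of q'(x_i) in a
   right-hand side is rewritten independently. *)
inductive derives :: "('q,'f,'g) tdtt \<Rightarrow> 'q \<Rightarrow> ('f,'v) tr \<Rightarrow> ('g, 'q \<times> 'v) tr \<Rightarrow> bool"
  and inst :: "('q,'f,'g) tdtt \<Rightarrow> ('f,'v) tr list \<Rightarrow> ('g, 'q \<times> nat) tr \<Rightarrow> ('g, 'q \<times> 'v) tr \<Rightarrow> bool"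
  for T :: "('q,'f,'g) tdtt" where
  derives_var: "derives T q (Var v) (Var (q, v))"
| derives_rule: "(q, a, length ss, r) \<in> rules T \<Longrightarrow> inst T ss r t \<Longrightarrow> derives T q (Nd a ss) t"
| inst_node: "list_all2 (inst T ss) rs ts \<Longrightarrow> inst T ss (Nd g rs) (Nd g ts)"
| inst_var: "1 \<le> i \<Longrightarrow> i \<le> length ss \<Longrightarrow> derives T q' (ss ! (i - 1)) t \<Longrightarrow> inst T ss (Var (q', i)) t"

definition produces :: "('q,'f,'g) tdtt \<Rightarrow> 'q \<Rightarrow> 'f gtree \<Rightarrow> 'g gtree \<Rightarrow> bool" where
  "produces T q s t \<longleftrightarrow> derives T q (to_tr s :: ('f, unit) tr) (to_tr t)"

definition dom_st :: "('q,'f,'g) tdtt \<Rightarrow> 'q \<Rightarrow> 'f gtree set" where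
  "dom_st T q = {s. \<exists>t. produces T q s t}"

definition rhs_set :: "('q,'f,'g) tdtt \<Rightarrow> 'q \<Rightarrow> 'f \<Rightarrow> nat \<Rightarrow> ('g, 'q \<times> nat) tr set" where
  "rhs_set T q a k = {r. (q, a, k, r) \<in> rules T}"

definition states_at :: "('g, 'q \<times> nat) tr set \<Rightarrow> nat \<Rightarrow> 'q set" where
  "states_at \<Gamma> i = {q'. \<exists>r\<in>\<Gamma>. (q', i) \<in> vars_tr r}"

definition dom_aut :: "('q,'f,'g) tdtt \<Rightarrow> ('q set, 'f, 'f) tdtt" where
  "dom_aut T = \<lparr> states = Pow (states T), inp = inp T, outp = inp T,
     rules =
       {(S, a, k, Nd a (map (\<lambda>i. Var (\<Union>q\<in>S. states_at (\<Gamma> q) i, i)) [1..<k+1])) | S a k \<Gamma>.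
          (a, k) \<in> inp T \<and> S \<noteq> {} \<and> S \<subseteq> states T
          \<and> (\<forall>q\<in>S. \<Gamma> q \<noteq> {} \<and> \<Gamma> q \<subseteq> rhs_set T q a k)}
       \<union> {({}, a, k, Nd a (map (\<lambda>i. Var ({}, i)) [1..<k+1])) | a k. (a, k) \<in> inp T},
     init = {init T} \<rparr>"

definition prod_tt :: "('q,'f,'g) tdtt \<Rightarrow> ('p,'g,'h) tdtt \<Rightarrow> ('q \<times> 'p, 'f, 'h) tdtt" where
  "prod_tt T T' = \<lparr> states = states T \<times> states T', inp = inp T, outp = outp T',
     rules = {((q, p), a, k, map_tr id (\<lambda>(p', (q'', i)). ((q'', p'), i)) \<zeta>) | q a k \<xi> p \<zeta>.
                (q, a, k, \<xi>) \<in> rules T \<and> p \<in> states T' \<and> derives T' p \<xi> \<zeta>},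
     init = (init T, init T') \<rparr>"

end

theory Submission
  imports Defs
begin

(* At its root T1 applies a rule q1(a(x_1,...,x_k)) -> xi, and t is
   obtained by instantiating the leaves q''(x_i) of xi. The domain automaton is run from S over xi,
   maintaining the invariant that the current subtree of t lies in dom(q) for every q in the
   current state set: at an output node, each q in the set has a successful derivation, whose first
   rule r_q gives the automaton rule with Gamma_q = {r_q}, and every state it sends to a child
   succeeds on that child. At a leaf q''(x_i) reached in state set S', the induction hypothesis
   applied to (q'', S') on the i-th input subtree yields the required derivation of the product. *)

fun of_tr :: "('f, 'v) tr \<Rightarrow> 'f gtree" where
  "of_tr (Nd a ts) = GNd a (map of_tr ts)"
| "of_tr (Var v) = undefined"

lemma vars_tr_to_tr [simp]: "vars_tr (to_tr s) = {}"
  by (induction s) auto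

lemma to_tr_of_tr: "vars_tr x = {} \<Longrightarrow> to_tr (of_tr x) = x"
  by (induction x) (auto intro: map_idI)

lemma vars_tr_derives:
  "derives T q x u \<Longrightarrow> snd ` vars_tr u \<subseteq> vars_tr x"
  "inst T xs r u \<Longrightarrow> snd ` vars_tr u \<subseteq> (\<Union>x\<in>set xs. vars_tr x)"
proof (induction rule: derives_inst.inducts)
  case (inst_node ss rs ts g)
  then show ?case by (fastforce simp: list_all2_conv_all_nth in_set_conv_nth)
next
  case (inst_var i ss q' t)
  then have "ss ! (i - 1) \<in> set ss" by simp
  with inst_var show ?case by blast
qed auto

lemma derives_ground_output:
  assumes "derives T q (to_tr s) u"
  shows "u = to_tr (of_tr u)"
  using vars_tr_derives(1)[OF assms] by (simp add: to_tr_of_tr)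

inductive_cases derives_NdE: "derives T q (Nd a xs) u"
inductive_cases inst_VarE: "inst T xs (Var v) u"
inductive_cases inst_NdE: "inst T xs (Nd g rs) u"

abbreviation to_trs :: "'f gtree list \<Rightarrow> ('f, unit) tr list" where
  "to_trs ss \<equiv> map to_tr ss"

lemma produces_GNd_iff:
  "produces T q (GNd a ss) t \<longleftrightarrow>
     (\<exists>r. (q, a, length ss, r) \<in> rules T \<and> inst T (to_trs ss) r (to_tr t))"
proof -
  have "length (to_trs ss) = length ss" by simp
  then show ?thesis
    unfolding produces_def to_tr.simps by (auto elim!: derives_NdE intro: derives_rule)
qed

lemma derives_of_inst_var:
  "inst T xs r u \<Longrightarrow> (q, i) \<in> vars_tr r \<Longrightarrow>
     1 \<le> i \<and> i \<le> length xs \<and> (\<exists>u'. derives T q (xs ! (i - 1)) u')"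
proof (induction r arbitrary: u)
  case (Var v)
  then show ?case by (auto elim: inst_VarE)
next
  case (Nd g rs)
  from Nd.prems(1) obtain us where "list_all2 (inst T xs) rs us"
    by (auto elim: inst_NdE)
  moreover obtain r where "r \<in> set rs" "(q, i) \<in> vars_tr r"
    using Nd.prems(2) by auto
  ultimately show ?case
    using Nd.IH by (metis in_set_conv_nth list_all2_conv_all_nth)
qed

lemma dom_st_of_inst_var:
  fixes us :: "'f gtree list"
  assumes "inst T (to_trs us) r u" and "(q, i) \<in> vars_tr r"
  shows "us ! (i - 1) \<in> dom_st T q"
proof -
  obtain u' where "derives T q (to_tr (us ! (i - 1)) :: ('f, unit) tr) u'"
    using derives_of_inst_var[OF assms] by auto
  then have "produces T q (us ! (i - 1)) (of_tr u')"
    unfolding produces_def using derives_ground_output by metis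
  then show ?thesis
    unfolding dom_st_def by blast
qed

lemma dom_aut_rule_of_dom_st:
  fixes T :: "('q, 'f, 'g) tdtt" and us :: "'f gtree list"
  assumes "wf_tdtt T" and "(g, length us) \<in> inp T" and "S \<subseteq> states T"
    and "\<forall>q\<in>S. GNd g us \<in> dom_st T q"
  obtains C where
    "(S, g, length us, Nd g (map (\<lambda>i. Var (C i, i)) [1..<length us + 1])) \<in> rules (dom_aut T)"
    and "\<And>i. C i \<subseteq> states T"
    and "\<And>i q. q \<in> C i \<Longrightarrow> us ! (i - 1) \<in> dom_st T q"
proof (cases "S = {}")
  case True
  then show ?thesis
    using assms(2) that[of "\<lambda>_. {}"] by (simp add: dom_aut_def)
next
  case False
  have "\<forall>q\<in>S. \<exists>r. (q, g, length us, r) \<in> rules T \<and>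
      (\<exists>u. inst T (to_trs us) r u)"
  proof
    fix q assume "q \<in> S"
    then obtain t where "produces T q (GNd g us) t"
      using assms(4) unfolding dom_st_def by blast
    then show "\<exists>r. (q, g, length us, r) \<in> rules T \<and>
        (\<exists>u. inst T (to_trs us) r u)"
      unfolding produces_GNd_iff by blast
  qed
  then obtain R where R: "\<forall>q\<in>S. (q, g, length us, R q) \<in> rules T \<and>
      (\<exists>u. inst T (to_trs us) (R q) u)"
    by (auto dest!: bchoice)
  \<comment> \<open>take \<Gamma> q = {R q}, the first rule of a successful derivation of q\<close>
  define C where "C i = (\<Union>q\<in>S. states_at {R q} i)" for i
  show ?thesis
  proof (rule that)
    show "(S, g, length us, Nd g (map (\<lambda>i. Var (C i, i)) [1..<length us + 1])) \<in> rules (dom_aut T)"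
    proof -
      have "\<forall>q\<in>S. {R q} \<noteq> {} \<and> {R q} \<subseteq> rhs_set T q g (length us)"
        using R by (simp add: rhs_set_def)
      then show ?thesis
        unfolding dom_aut_def C_def using False assms(2,3) by auto
    qed
    show "C i \<subseteq> states T" for i
      using assms(1) R unfolding C_def states_at_def wf_tdtt_def by fastforce
    show "us ! (i - 1) \<in> dom_st T q" if "q \<in> C i" for i q
    proof -
      from that obtain q' where "q' \<in> S" and "(q, i) \<in> vars_tr (R q')"
        unfolding C_def states_at_def by blast
      with R show ?thesis by (meson dom_st_of_inst_var)
    qed
  qed
qed

lemma inst_Nd_Var_upt:
  assumes "length zs = length xs" and "\<And>j. j < length xs \<Longrightarrow> derives T (C (Suc j)) (xs ! j) (zs ! j)"
  shows "inst T xs (Nd g (map (\<lambda>i. Var (C i, i)) [1..<length xs + 1])) (Nd g zs)"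
  using assms by (auto intro!: inst_node inst_var simp: list_all2_conv_all_nth simp del: upt_Suc)

(* the leaf relabelling p'(q''(x_i)) \<mapsto> (q'', p')(x_i) of prod_tt_def *)
abbreviation prod_leaf :: "'p \<times> ('q \<times> nat) \<Rightarrow> ('q \<times> 'p) \<times> nat" where
  "prod_leaf \<equiv> \<lambda>(p', (q'', i)). ((q'', p'), i)"

lemma inst_prod_dom_aut:
  fixes T1 :: "('q1, 'f, 'g) tdtt" and T2 :: "('q2, 'g, 'h) tdtt" and ss :: "'f gtree list"
  defines "xs \<equiv> to_trs ss"
  assumes wf2: "wf_tdtt T2"
    and outer_IH: "\<And>s q S u. s \<in> set ss \<Longrightarrow> produces T1 q s u \<Longrightarrow> S \<subseteq> states T2 \<Longrightarrow>
      \<forall>q'\<in>S. u \<in> dom_st T2 q' \<Longrightarrow> produces (prod_tt T1 (dom_aut T2)) (q, S) s u"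
  shows "inst T1 xs \<xi> (to_tr t) \<Longrightarrow> wf_tr (inp T2) \<xi> \<Longrightarrow> S \<subseteq> states T2 \<Longrightarrow>
    \<forall>q\<in>S. t \<in> dom_st T2 q \<Longrightarrow>
    \<exists>\<zeta>. derives (dom_aut T2) S \<xi> \<zeta> \<and>
       inst (prod_tt T1 (dom_aut T2)) xs (map_tr id prod_leaf \<zeta>) (to_tr t)"
proof (induction \<xi> arbitrary: t S)
  case (Var v)
  obtain q i where v: "v = (q, i)" by force
  from Var.prems(1) have i: "1 \<le> i" "i \<le> length ss"
    and "produces T1 q (ss ! (i - 1)) t"
    unfolding v xs_def produces_def by (auto elim: inst_VarE)
  then have "produces (prod_tt T1 (dom_aut T2)) (q, S) (ss ! (i - 1)) t"
    using outer_IH Var.prems(3,4) by simp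
  then have "inst (prod_tt T1 (dom_aut T2)) xs (Var ((q, S), i)) (to_tr t)"
    using i unfolding xs_def produces_def by (auto intro: inst_var)
  then show ?case
    unfolding v by (auto intro: derives_var)
next
  case (Nd g rs)
  let ?A = "dom_aut T2" and ?P = "prod_tt T1 (dom_aut T2)"
  from Nd.prems(1) obtain ts where t: "to_tr t = Nd g ts" and ts: "list_all2 (inst T1 xs) rs ts"
    by (auto elim: inst_NdE)
  obtain us where t_eq: "t = GNd g us" and ts_eq: "ts = map to_tr us"
    using t by (cases t) auto
  have len: "length us = length rs"
    using ts unfolding ts_eq by (simp add: list_all2_lengthD)
  have "(g, length us) \<in> inp T2"
    using Nd.prems(2) len by simp
  then obtain C where
    rule: "(S, g, length us, Nd g (map (\<lambda>i. Var (C i, i)) [1..<length us + 1])) \<in> rules ?A"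
    and C_states: "\<And>i. C i \<subseteq> states T2"
    and C_dom: "\<And>i q. q \<in> C i \<Longrightarrow> us ! (i - 1) \<in> dom_st T2 q"
    using dom_aut_rule_of_dom_st[OF wf2 _ Nd.prems(3)] Nd.prems(4) unfolding t_eq by blast
  have "\<forall>j<length rs. \<exists>\<zeta>. derives ?A (C (Suc j)) (rs ! j) \<zeta> \<and>
      inst ?P xs (map_tr id prod_leaf \<zeta>) (to_tr (us ! j))" (is "\<forall>j<_. ?child j")
  proof (intro allI impI)
    fix j assume "j < length rs"
    with Nd.prems(2) ts C_states C_dom[of _ "Suc j"] len show "?child j"
      unfolding ts_eq by (intro Nd.IH) (auto simp: list_all2_conv_all_nth)
  qed
  then obtain zs where zs_len: "length zs = length rs"
    and zs: "\<And>j. j < length rs \<Longrightarrow> derives ?A (C (Suc j)) (rs ! j) (zs ! j) \<and>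
      inst ?P xs (map_tr id prod_leaf (zs ! j)) (to_tr (us ! j))"
    unfolding Skolem_list_nth by blast
  have "derives ?A S (Nd g rs) (Nd g zs)"
  proof (rule derives_rule)
    show "inst ?A rs (Nd g (map (\<lambda>i. Var (C i, i)) [1..<length rs + 1])) (Nd g zs)"
      using zs_len zs by (blast intro: inst_Nd_Var_upt)
  qed (use rule len in simp)
  moreover have "inst ?P xs (map_tr id prod_leaf (Nd g zs)) (to_tr t)"
    using zs zs_len len unfolding t_eq by (auto intro!: inst_node simp: list_all2_conv_all_nth)
  ultimately show ?case by blast
qed

lemma produces_prod_dom_aut:
  fixes T1 :: "('q1, 'f, 'g) tdtt" and T2 :: "('q2, 'g, 'h) tdtt"
  assumes wf1: "wf_tdtt T1" and wf2: "wf_tdtt T2" and io: "outp T1 = inp T2"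
  shows "produces T1 q s t \<Longrightarrow> S \<subseteq> states T2 \<Longrightarrow> \<forall>q'\<in>S. t \<in> dom_st T2 q' \<Longrightarrow>
    produces (prod_tt T1 (dom_aut T2)) (q, S) s t"
proof (induction s arbitrary: q S t)
  case (GNd a ss)
  from GNd.prems(1) obtain \<xi> where
    rule: "(q, a, length ss, \<xi>) \<in> rules T1" and inst: "inst T1 (to_trs ss) \<xi> (to_tr t)"
    unfolding produces_GNd_iff by blast
  have "wf_tr (inp T2) \<xi>"
    using wf1 rule io unfolding wf_tdtt_def by fastforce
  then obtain \<zeta> where
    run: "derives (dom_aut T2) S \<xi> \<zeta>"
    and inst': "inst (prod_tt T1 (dom_aut T2)) (to_trs ss) (map_tr id prod_leaf \<zeta>) (to_tr t)"
    using inst_prod_dom_aut[OF wf2 GNd.IH inst] GNd.prems(2,3) by blast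
  have "((q, S), a, length ss, map_tr id prod_leaf \<zeta>) \<in> rules (prod_tt T1 (dom_aut T2))"
  proof -
    have "S \<in> states (dom_aut T2)"
      using GNd.prems(2) by (simp add: dom_aut_def)
    with rule run show ?thesis
      unfolding prod_tt_def tdtt.simps by blast
  qed
  with inst' show ?case
    unfolding produces_GNd_iff by blast
qed

theorem lemma13:
  fixes T1 :: "('q1, 'f, 'g) tdtt" and T2 :: "('q2, 'g, 'h) tdtt"
  assumes "wf_tdtt T1" and "wf_tdtt T2" and "outp T1 = inp T2"
    and "wf_gtree (inp T1) s"
    and "q1 \<in> states T1"
    and "produces T1 q1 s t"
    and "S \<subseteq> states T2"
    and "\<forall>q\<in>S. t \<in> dom_st T2 q"
  shows "produces (prod_tt T1 (dom_aut T2)) (q1, S) s t"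
  using produces_prod_dom_aut[OF assms(1-3) assms(6-8)] .

end
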